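(* With the setup below, \[ \bar\nabla_aP^{ab}=\bar\nabla_a\Pi^{ab}=\bar\nabla_aP^a{}_b=\bar\nabla_a\Pi^a{}_b=0, \] \[ P^{bc}\bar\nabla_aP_{bc}=-E_a,\quad P_{bc}\bar\nabla_aP^{bc}=E_a,\quad \Pi^{bc}\bar\nabla_a\Pi_{bc}=-W_a,\quad \Pi_{bc}\bar\nabla_a\Pi^{bc}=W_a, \] \[ P^d{}_r\bar\nabla_b\Pi^r{}_d=\Pi^d{}_r\bar\nabla_bP^r{}_d=P^{dr}\bar\nabla_dP_{rb}=\Pi^{dr}\bar\nabla_d\Pi_{rb}=0 . \]
   Context: Let $V$ be an $n$-dimensional smooth manifold with a $C^\infty$ pseudo-Riemannian metric $g_{ab}$ of arbitrary signature, Levi-Civita connection $\nabla$ with connection coefficients $\gamma^a{}_{bc}$; indices are raised and lowered with $g$. Let $P_{ab}$, $\Pi_{ab}$ be smooth symmetric tensor fields forming at each point a pair of orthogonal complementary projectors: $P_{ab}+\Pi_{ab}=g_{ab}$, $P_{aq}P^q{}_b=P_{ab}$, $\Pi_{aq}\Pi^q{}_b=\Pi_{ab}$, $P_{aq}\Pi^q{}_b=0$; let $p=P^a{}_a$ (the constant rank of $P$), with $1\le p\le n-1$. Define $M_{abc}=\nabla_bP_{ac}+\nabla_cP_{ab}-\nabla_aP_{bc}$, $E_a=M_{acb}P^{cb}$, $W_a=-M_{acb}\Pi^{cb}$. The bi-conformal connection $\bar\nabla$ is the torsion-free linear connection with coefficients $\bar\gamma^a{}_{bc}=\gamma^a{}_{bc}+L^a{}_{bc}$,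 where $L^a{}_{bc}=\frac{1}{2p}(E_bP^a{}_c+E_cP^a{}_b)+\frac{1}{2(n-p)}(W_b\Pi^a{}_c+W_c\Pi^a{}_b)+\frac12(P^a{}_q-\Pi^a{}_q)M^q{}_{bc}$; thus on any tensor $\bar\nabla_a$ equals $\nabla_a$ plus a term $+L^{a_s}{}_{ac}X^{\dots c\dots}$ for each contravariant index and $-L^{c}{}_{ab_s}X_{\dots c\dots}$ for each covariant index. In expressions such as $\bar\nabla_aP^{ab}$, the tensor $P^{ab}=g^{ac}g^{bd}P_{cd}$ is formed first and then differentiated. *)

theory Defs
  imports "HOL-Analysis.Analysis"
begin

text \<open>Points are x :: real^'n (a chart domain U, open in R^n,
  n = CARD('n)). A (0,2) / (2,0) / (1,1) tensor field is a map x \<mapsto> real^'n^'n,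
  component T x $ a $ b. Connection coefficients: Gam x a b c = Gamma^a_{bc}.\<close>

type_synonym ('n) tfield = "real^'n \<Rightarrow> real^'n^'n"
type_synonym 'n conn = "real^'n \<Rightarrow> 'n \<Rightarrow> 'n \<Rightarrow> 'n \<Rightarrow> real"

definition pd :: "(real^'n::finite \<Rightarrow> real) \<Rightarrow> 'n \<Rightarrow> real^'n \<Rightarrow> real" where
  "pd f c x = frechet_derivative f (at x) (axis c 1)"

fun Ck_on :: "nat \<Rightarrow> (real^'n::finite) set \<Rightarrow> (real^'n \<Rightarrow> real) \<Rightarrow> bool" where
  "Ck_on 0 U f = continuous_on U f"
| "Ck_on (Suc k) U f = ((\<forall>x\<in>U. f differentiable (at x)) \<and> (\<forall>c. Ck_on k U (\<lambda>x. pd f c x)))"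

definition smooth_on :: "(real^'n::finite) set \<Rightarrow> (real^'n \<Rightarrow> real) \<Rightarrow> bool" where
  "smooth_on U f = (\<forall>k. Ck_on k U f)"

definition smooth_tfield :: "(real^'n) set \<Rightarrow> ('n::finite) tfield \<Rightarrow> bool" where
  "smooth_tfield U T = (\<forall>a b. smooth_on U (\<lambda>x. T x $ a $ b))"

definition ginv :: "('n::finite) tfield \<Rightarrow> ('n::finite) tfield" where
  "ginv g x = matrix_inv (g x)"

definition up2 :: "('n::finite) tfield \<Rightarrow> ('n::finite) tfield \<Rightarrow> ('n::finite) tfield" where
  "up2 g T x = (\<chi> a b. \<Sum>c\<in>UNIV. \<Sum>d\<in>UNIV. ginv g x $ a $ c * ginv g x $ b $ d * T x $ c $ d)"

definition up1 :: "('n::finite) tfield \<Rightarrow> ('n::finite) tfield \<Rightarrow> ('n::finite) tfield" where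
  "up1 g T x = (\<chi> a b. \<Sum>c\<in>UNIV. ginv g x $ a $ c * T x $ c $ b)"

definition christoffel :: "('n::finite) tfield \<Rightarrow> ('n::finite) conn" where
  "christoffel g x a b c = (1/2) * (\<Sum>d\<in>UNIV. ginv g x $ a $ d *
      (pd (\<lambda>y. g y $ d $ c) b x + pd (\<lambda>y. g y $ d $ b) c x - pd (\<lambda>y. g y $ b $ c) d x))"

text \<open>Covariant derivatives with respect to connection coefficients Gam; the derivative
  index is the first argument after x.\<close>
definition cov02 :: "('n::finite) conn \<Rightarrow> ('n::finite) tfield \<Rightarrow> real^'n \<Rightarrow> 'n \<Rightarrow> 'n \<Rightarrow> 'n \<Rightarrow> real" where
  "cov02 Gam T x a b c = pd (\<lambda>y. T y $ b $ c) a x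
      - (\<Sum>d\<in>UNIV. Gam x d a b * T x $ d $ c) - (\<Sum>d\<in>UNIV. Gam x d a c * T x $ b $ d)"

definition cov20 :: "('n::finite) conn \<Rightarrow> ('n::finite) tfield \<Rightarrow> real^'n \<Rightarrow> 'n \<Rightarrow> 'n \<Rightarrow> 'n \<Rightarrow> real" where
  "cov20 Gam T x a b c = pd (\<lambda>y. T y $ b $ c) a x
      + (\<Sum>d\<in>UNIV. Gam x b a d * T x $ d $ c) + (\<Sum>d\<in>UNIV. Gam x c a d * T x $ b $ d)"

text \<open>(1,1) tensor T^b_c (first index contravariant).\<close>
definition cov11 :: "('n::finite) conn \<Rightarrow> ('n::finite) tfield \<Rightarrow> real^'n \<Rightarrow> 'n \<Rightarrow> 'n \<Rightarrow> 'n \<Rightarrow> real" where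
  "cov11 Gam T x a b c = pd (\<lambda>y. T y $ b $ c) a x
      + (\<Sum>d\<in>UNIV. Gam x b a d * T x $ d $ c) - (\<Sum>d\<in>UNIV. Gam x d a c * T x $ b $ d)"

definition nabla :: "('n::finite) tfield \<Rightarrow> ('n::finite) tfield \<Rightarrow> real^'n \<Rightarrow> 'n \<Rightarrow> 'n \<Rightarrow> 'n \<Rightarrow> real" where
  "nabla g T = cov02 (christoffel g) T"

definition Mten :: "('n::finite) tfield \<Rightarrow> ('n::finite) tfield \<Rightarrow> real^'n \<Rightarrow> 'n \<Rightarrow> 'n \<Rightarrow> 'n \<Rightarrow> real" where
  "Mten g P x a b c = nabla g P x b a c + nabla g P x c a b - nabla g P x a b c"

definition Evec :: "('n::finite) tfield \<Rightarrow> ('n::finite) tfield \<Rightarrow> real^'n \<Rightarrow> 'n \<Rightarrow> real" where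
  "Evec g P x a = (\<Sum>c\<in>UNIV. \<Sum>b\<in>UNIV. Mten g P x a c b * up2 g P x $ c $ b)"

definition Wvec :: "('n::finite) tfield \<Rightarrow> ('n::finite) tfield \<Rightarrow> ('n::finite) tfield \<Rightarrow> real^'n \<Rightarrow> 'n \<Rightarrow> real" where
  "Wvec g P Q x a = - (\<Sum>c\<in>UNIV. \<Sum>b\<in>UNIV. Mten g P x a c b * up2 g Q x $ c $ b)"

text \<open>L^a_{bc}, with p the rank of P and n = CARD('n).\<close>
definition Lten :: "nat \<Rightarrow> ('n::finite) tfield \<Rightarrow> ('n::finite) tfield \<Rightarrow> ('n::finite) tfield \<Rightarrow> ('n::finite) conn" where
  "Lten p g P Q x a b c =
     (1 / (2 * real p)) * (Evec g P x b * up1 g P x $ a $ c + Evec g P x c * up1 g P x $ a $ b)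
   + (1 / (2 * (real CARD('n) - real p))) *
        (Wvec g P Q x b * up1 g Q x $ a $ c + Wvec g P Q x c * up1 g Q x $ a $ b)
   + (1/2) * (\<Sum>q\<in>UNIV. (up1 g P x $ a $ q - up1 g Q x $ a $ q) *
        (\<Sum>d\<in>UNIV. ginv g x $ q $ d * Mten g P x d b c))"

definition biconf :: "nat \<Rightarrow> ('n::finite) tfield \<Rightarrow> ('n::finite) tfield \<Rightarrow> ('n::finite) tfield \<Rightarrow> ('n::finite) conn" where
  "biconf p g P Q x a b c = christoffel g x a b c + Lten p g P Q x a b c"

end

theory Submission
  imports Defs
begin

text \<open>The Levi-Civita connection commutes with raising indices and, since \<open>\<nabla>g = 0\<close>, gives
  \<open>\<nabla>\<Pi> = -\<nabla>P\<close>; differentiating \<open>P g\<^sup>-\<^sup>1 P = P\<close> shows that \<open>N\<^sub>a = \<nabla>\<^sub>aP\<close> has only mixed components,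
  \<open>N = N g\<^sup>-\<^sup>1 P + P g\<^sup>-\<^sup>1 N\<close>. So at each point every bi-conformal derivative in the statement is a
  finite contraction of \<open>N\<close> and \<open>L\<close>, and the \<open>L\<close>-parts reduce to three contractions of \<open>L\<close>:
  \<open>L\<^sup>a\<^sub>a\<^sub>d = (E\<^sub>d + W\<^sub>d)/2\<close>, \<open>L\<^sup>b\<^sub>a\<^sub>d P\<^sup>a\<^sup>d = -E\<^sup>b/2\<close> and \<open>L\<^sup>d\<^sub>a\<^sub>b P\<^sup>a\<^sub>d = E\<^sub>b/2\<close>.
  Two identities hold for every linear connection \<open>D\<close>: \<open>P\<^sub>b\<^sub>c D P\<^sup>b\<^sup>c = -P\<^sup>b\<^sup>c D P\<^sub>b\<^sub>c\<close> because
  \<open>P\<^sub>b\<^sub>c P\<^sup>b\<^sup>c = p\<close> is constant, and \<open>P\<^sup>d\<^sub>r D \<Pi>\<^sup>r\<^sub>d = 0\<close> because \<open>\<Pi>\<close> is idempotent and \<open>P\<Pi> = \<Pi>P = 0\<close>.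
  The \<open>\<Pi>\<close>-identities are the \<open>P\<close>-identities of the pair \<open>(\<Pi>, P)\<close> of rank \<open>n - p\<close>, which has the
  same bi-conformal connection, with \<open>E\<close> and \<open>W\<close> exchanged.\<close>

section \<open>Matrix identities\<close>

lemma matrix_add_rdistrib: "((A::'a::semiring_1^'n^'m) + B) ** C = A ** C + B ** C"
  by (simp add: matrix_matrix_mult_def vec_eq_iff sum.distrib ring_distribs)

lemma matrix_diff_ldistrib: "(A::'a::ring_1^'n^'m) ** (B - C) = A ** B - A ** C"
  by (simp add: matrix_matrix_mult_def vec_eq_iff sum_subtractf ring_distribs)

lemma matrix_diff_rdistrib: "((A::'a::ring_1^'n^'m) - B) ** C = A ** C - B ** C"
  by (simp add: matrix_matrix_mult_def vec_eq_iff sum_subtractf ring_distribs)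

lemma matrix_minus_left: "(- (A::'a::ring_1^'n^'m)) ** B = - (A ** B)"
  by (simp add: matrix_matrix_mult_def vec_eq_iff sum_negf)

lemma matrix_minus_right: "(A::'a::ring_1^'n^'m) ** (- B) = - (A ** B)"
  by (simp add: matrix_matrix_mult_def vec_eq_iff sum_negf)

lemma matrix_mult_component: "(A ** B) $ i $ j = (\<Sum>k\<in>UNIV. A $ i $ k * B $ k $ j)"
  by (simp add: matrix_matrix_mult_def)

lemma transpose_component: "transpose A $ i $ j = A $ j $ i"
  by (simp add: transpose_def)

lemma transpose_zero [simp]: "transpose 0 = 0"
  by (simp add: transpose_def vec_eq_iff)

lemma transpose_diff: "transpose (A - B) = transpose A - transpose (B::'a::ring_1^'n^'m)"
  by (simp add: transpose_def vec_eq_iff)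

lemma symmetric_component: "transpose S = S \<Longrightarrow> S $ i $ j = S $ j $ i"
  by (metis transpose_component)

lemmas matrix_algebra_simps = matrix_mul_assoc matrix_add_ldistrib matrix_add_rdistrib
  matrix_diff_ldistrib matrix_diff_rdistrib matrix_minus_left matrix_minus_right matrix_transpose_mul

lemma sum_product_symmetric_eq_trace:
  fixes A X :: "'a::comm_semiring_1^'n^'n"
  assumes "transpose X = X"
  shows "(\<Sum>b\<in>UNIV. \<Sum>c\<in>UNIV. A $ b $ c * X $ b $ c) = trace (A ** X)"
  unfolding trace_def matrix_mult_component
  by (intro sum.cong refl) (metis symmetric_component[OF assms] mult.commute)

lemma trace_transpose: "trace (transpose A) = trace (A::'a::semiring_1^'n^'n)"
  by (simp add: trace_def transpose_def)

lemma sum_product_eq_trace: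
  "(\<Sum>b\<in>UNIV. \<Sum>c\<in>UNIV. A $ b $ c * B $ b $ c) = trace (transpose A ** (B::'a::comm_semiring_1^'n^'n))"
  unfolding trace_def matrix_mult_component transpose_component by (rule sum.swap)

lemma idempotent_sandwich_of_variation:
  fixes X h N :: "'a::comm_ring_1^'n^'n"
  assumes idem: "X ** h ** X = X" and split: "N = N ** h ** X + X ** h ** N"
  shows "X ** h ** N ** h ** X = 0"
proof -
  have idem': "Y ** X ** h ** X = Y ** X" for Y
    by (metis idem matrix_mul_assoc)
  from split have "X ** h ** N ** h ** X = X ** h ** (N ** h ** X + X ** h ** N) ** h ** X"
    by (rule arg_cong)
  also have "\<dots> = X ** h ** N ** h ** X + X ** h ** N ** h ** X"
    by (simp add: matrix_algebra_simps idem idem')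
  finally show ?thesis by simp
qed

lemma trace_of_idempotent_sandwich:
  fixes X h N :: "'a::comm_ring_1^'n^'n"
  assumes idem: "X ** h ** X = X" and sandwich: "X ** h ** N ** h ** X = 0"
  shows "trace (h ** X ** h ** N) = 0"
proof -
  have "trace (h ** X ** h ** N) = trace (X ** h ** N ** h)"
    by (metis matrix_mul_assoc trace_mul_sym)
  also have "\<dots> = trace (X ** h ** X ** h ** N ** h)"
    by (simp add: idem)
  also have "\<dots> = trace (h ** (X ** h ** N ** h ** X))"
    by (metis matrix_mul_assoc trace_mul_sym)
  finally show ?thesis by (simp add: sandwich trace_def)
qed

definition sym_prod :: "'a::comm_semiring_1^'n \<Rightarrow> 'a^'n^'n \<Rightarrow> 'n \<Rightarrow> 'n \<Rightarrow> 'n \<Rightarrow> 'a" where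
  "sym_prod v K a b c = v $ b * K $ a $ c + v $ c * K $ a $ b"

lemma sum_sym_prod_trace:
  "(\<Sum>a\<in>UNIV. sym_prod v K a a d) = (v v* K) $ d + v $ d * trace K"
  by (simp add: sym_prod_def sum.distrib vector_matrix_mult_def trace_def sum_distrib_left)

lemma sum_sym_prod_contract_lower:
  assumes "transpose S = S"
  shows "(\<Sum>a\<in>UNIV. \<Sum>d\<in>UNIV. sym_prod v K b a d * S $ a $ d) = 2 * ((K ** S) *v v) $ b"
proof -
  have "(\<Sum>a\<in>UNIV. \<Sum>d\<in>UNIV. v $ a * K $ b $ d * S $ a $ d)
      = (\<Sum>a\<in>UNIV. \<Sum>d\<in>UNIV. v $ d * K $ b $ a * S $ a $ d)"
    by (subst sum.swap) (simp add: symmetric_component[OF assms] mult_ac)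
  moreover have "(\<Sum>a\<in>UNIV. \<Sum>d\<in>UNIV. v $ d * K $ b $ a * S $ a $ d) = ((K ** S) *v v) $ b"
    by (simp add: matrix_vector_mult_def matrix_mult_component sum_distrib_left mult_ac)
       (rule sum.swap)
  ultimately show ?thesis
    by (simp add: sym_prod_def ring_distribs sum.distrib mult_2)
qed

lemma sum_sym_prod_contract_upper:
  "(\<Sum>a\<in>UNIV. \<Sum>d\<in>UNIV. sym_prod v K d a b * S $ a $ d) = (v v* (S ** K)) $ b + v $ b * trace (K ** S)"
proof -
  have "(\<Sum>a\<in>UNIV. \<Sum>d\<in>UNIV. v $ a * K $ d $ b * S $ a $ d) = (v v* (S ** K)) $ b"
    by (simp add: vector_matrix_mult_def matrix_mult_component sum_distrib_left mult_ac)
  moreover have "(\<Sum>a\<in>UNIV. \<Sum>d\<in>UNIV. v $ b * K $ d $ a * S $ a $ d) = v $ b * trace (K ** S)"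
    by (subst sum.swap) (simp add: trace_def matrix_mult_component sum_distrib_left mult_ac)
  ultimately show ?thesis
    by (simp add: sym_prod_def ring_distribs sum.distrib)
qed

lemma sum_matrix_mult_contract:
  fixes R A :: "'a::comm_semiring_1^'n^'n"
  shows "(\<Sum>a\<in>UNIV. \<Sum>d\<in>UNIV. (\<Sum>e\<in>UNIV. R $ d $ e * f e a) * A $ a $ d)
     = (\<Sum>a\<in>UNIV. \<Sum>e\<in>UNIV. (A ** R) $ a $ e * f e a)"
proof -
  have "(\<Sum>d\<in>UNIV. (\<Sum>e\<in>UNIV. R $ d $ e * f e a) * A $ a $ d)
      = (\<Sum>e\<in>UNIV. (A ** R) $ a $ e * f e a)" for a
  proof -
    have "(\<Sum>d\<in>UNIV. (\<Sum>e\<in>UNIV. R $ d $ e * f e a) * A $ a $ d)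
        = (\<Sum>d\<in>UNIV. \<Sum>e\<in>UNIV. A $ a $ d * R $ d $ e * f e a)"
      unfolding sum_distrib_right by (intro sum.cong refl) (simp add: mult_ac)
    also have "\<dots> = (\<Sum>e\<in>UNIV. (A ** R) $ a $ e * f e a)"
      unfolding matrix_mult_component sum_distrib_right by (rule sum.swap)
    finally show ?thesis .
  qed
  thus ?thesis by simp
qed

lemma sum_contract_matrix_mult:
  fixes S T :: "'a::comm_semiring_1^'n^'n"
  shows "(\<Sum>b\<in>UNIV. \<Sum>c\<in>UNIV. S $ b $ c * (\<Sum>d\<in>UNIV. f d b * T $ c $ d))
     = (\<Sum>b\<in>UNIV. \<Sum>d\<in>UNIV. f d b * (S ** T) $ b $ d)"
proof (rule sum.cong[OF refl])
  fix b
  have "(\<Sum>c\<in>UNIV. S $ b $ c * (\<Sum>d\<in>UNIV. f d b * T $ c $ d))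
      = (\<Sum>c\<in>UNIV. \<Sum>d\<in>UNIV. f d b * (S $ b $ c * T $ c $ d))"
    unfolding sum_distrib_left by (intro sum.cong refl) (simp add: mult_ac)
  also have "\<dots> = (\<Sum>d\<in>UNIV. f d b * (S ** T) $ b $ d)"
    unfolding matrix_mult_component sum_distrib_left by (rule sum.swap)
  finally show "(\<Sum>c\<in>UNIV. S $ b $ c * (\<Sum>d\<in>UNIV. f d b * T $ c $ d))
      = (\<Sum>d\<in>UNIV. f d b * (S ** T) $ b $ d)" .
qed

lemma sum_triple_swap:
  fixes S :: "'n \<Rightarrow> 'n \<Rightarrow> 'a::semiring_0"
  shows "(\<Sum>d\<in>UNIV. \<Sum>r\<in>UNIV. S d r * (\<Sum>e\<in>UNIV. f e d r)) = (\<Sum>e\<in>UNIV. \<Sum>d\<in>UNIV. \<Sum>r\<in>UNIV. S d r * f e d r)"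
proof -
  have "(\<Sum>d\<in>UNIV. \<Sum>r\<in>UNIV. S d r * (\<Sum>e\<in>UNIV. f e d r))
      = (\<Sum>d\<in>UNIV. \<Sum>e\<in>UNIV. \<Sum>r\<in>UNIV. S d r * f e d r)"
    by (rule sum.cong[OF refl]) (unfold sum_distrib_left, rule sum.swap)
  also have "\<dots> = (\<Sum>e\<in>UNIV. \<Sum>d\<in>UNIV. \<Sum>r\<in>UNIV. S d r * f e d r)"
    by (rule sum.swap)
  finally show ?thesis .
qed

section \<open>The bi-conformal connection at a point\<close>

text \<open>Here \<open>gi\<close> is \<open>g\<^sup>-\<^sup>1\<close> and \<open>N a\<close> stands for \<open>\<nabla>\<^sub>aP\<^sub>b\<^sub>c\<close>. As matrices, \<open>gi ** P ** gi\<close> is \<open>P\<^sup>a\<^sup>b\<close> and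
  \<open>gi ** P\<close> is \<open>P\<^sup>a\<^sub>b\<close>; \<open>L a b c\<close> is \<open>L\<^sup>a\<^sub>b\<^sub>c\<close>.\<close>

locale biconformal_algebra =
  fixes g gi P Q :: "real^'n::finite^'n" and N :: "'n \<Rightarrow> real^'n^'n" and p :: real
  assumes gi_sym: "transpose gi = gi"
    and gi_g: "gi ** g = mat 1" and g_gi: "g ** gi = mat 1"
    and P_sym: "transpose P = P" and Q_sym: "transpose Q = Q"
    and P_add_Q: "P + Q = g"
    and P_idem: "P ** gi ** P = P" and Q_idem: "Q ** gi ** Q = Q" and P_Q_orth: "P ** gi ** Q = 0"
    and N_sym: "\<And>a. transpose (N a) = N a"
    and N_split: "\<And>a. N a = N a ** gi ** P + P ** gi ** N a"
    and trace_P: "trace (gi ** P) = p"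
    and p_pos: "0 < p" and p_less: "p < real CARD('n)"
begin

lemma Q_P_orth: "Q ** gi ** P = 0"
proof -
  have "transpose (P ** gi ** Q) = Q ** gi ** P"
    by (simp add: matrix_transpose_mul P_sym Q_sym gi_sym matrix_mul_assoc)
  thus ?thesis using P_Q_orth by simp
qed

lemma gi_P_add_gi_Q: "gi ** P + gi ** Q = mat 1"
  by (simp add: matrix_add_ldistrib[symmetric] P_add_Q gi_g)

lemma raised_P_add_raised_Q: "gi ** P ** gi + gi ** Q ** gi = gi"
  by (simp add: matrix_add_rdistrib[symmetric] gi_P_add_gi_Q)

lemma trace_Q: "trace (gi ** Q) = real CARD('n) - p"
proof -
  have "gi ** Q = mat 1 - gi ** P" using gi_P_add_gi_Q by (simp add: algebra_simps)
  thus ?thesis by (simp add: trace_sub trace_I trace_P)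
qed

lemma raised_P_sym: "transpose (gi ** P ** gi) = gi ** P ** gi"
  by (simp add: matrix_transpose_mul gi_sym P_sym matrix_mul_assoc)

lemma raised_Q_sym: "transpose (gi ** Q ** gi) = gi ** Q ** gi"
  by (simp add: matrix_transpose_mul gi_sym Q_sym matrix_mul_assoc)

lemma projector_simps:
  "X ** P ** gi ** P = X ** P" "X ** Q ** gi ** Q = X ** Q"
  "X ** P ** gi ** Q = 0" "X ** Q ** gi ** P = 0"
  "X ** gi ** g = X" "X ** g ** gi = X"
  by (metis P_idem Q_idem P_Q_orth Q_P_orth gi_g g_gi matrix_mul_assoc matrix_mul_rid times0_right)+

lemma N_split_Q: "N a = N a ** gi ** Q + Q ** gi ** N a"
proof -
  have Q: "Q = g - P" using P_add_Q by (simp add: algebra_simps)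
  have "N a ** gi ** Q + Q ** gi ** N a = 2 *\<^sub>R N a - (N a ** gi ** P + P ** gi ** N a)"
    unfolding Q by (simp add: matrix_algebra_simps projector_simps g_gi scaleR_2)
  also have "\<dots> = N a" by (simp add: scaleR_2 N_split[of a, symmetric])
  finally show ?thesis by simp
qed

lemma P_N_P: "P ** gi ** N a ** gi ** P = 0"
  by (rule idempotent_sandwich_of_variation[OF P_idem N_split])

lemma Q_N_Q: "Q ** gi ** N a ** gi ** Q = 0"
  by (rule idempotent_sandwich_of_variation[OF Q_idem N_split_Q])

lemma sandwich_simps:
  "X ** P ** gi ** N a ** gi ** P = 0" "X ** Q ** gi ** N a ** gi ** Q = 0"
  by (metis P_N_P Q_N_Q matrix_mul_assoc times0_right)+

lemma trace_raised_P_N: "trace (gi ** P ** gi ** N a) = 0"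
  by (rule trace_of_idempotent_sandwich[OF P_idem P_N_P])

lemma trace_raised_Q_N: "trace (gi ** Q ** gi ** N a) = 0"
  by (rule trace_of_idempotent_sandwich[OF Q_idem Q_N_Q])

definition M :: "'n \<Rightarrow> 'n \<Rightarrow> 'n \<Rightarrow> real" where
  "M a b c = N b $ a $ c + N c $ a $ b - N a $ b $ c"

definition E :: "real^'n" where
  "E = (\<chi> a. \<Sum>c\<in>UNIV. \<Sum>b\<in>UNIV. M a c b * (gi ** P ** gi) $ c $ b)"

definition W :: "real^'n" where
  "W = (\<chi> a. - (\<Sum>c\<in>UNIV. \<Sum>b\<in>UNIV. M a c b * (gi ** Q ** gi) $ c $ b))"

definition div_N :: "real^'n^'n \<Rightarrow> real^'n" where
  "div_N S = (\<chi> a. \<Sum>c\<in>UNIV. (N c ** S) $ a $ c)"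

lemma div_N_component: "div_N S $ a = (\<Sum>c\<in>UNIV. \<Sum>k\<in>UNIV. N c $ a $ k * S $ k $ c)"
  by (simp add: div_N_def matrix_mult_component)

lemma M_sym: "M a b c = M a c b"
  unfolding M_def using symmetric_component[OF N_sym, of a b c] by simp

lemma M_contract_first:
  assumes S: "transpose S = S"
  shows "(\<Sum>a\<in>UNIV. \<Sum>e\<in>UNIV. S $ a $ e * M e a d) = trace (S ** N d)"
proof -
  have "(\<Sum>a\<in>UNIV. \<Sum>e\<in>UNIV. S $ a $ e * N a $ e $ d) = (\<Sum>a\<in>UNIV. \<Sum>e\<in>UNIV. S $ a $ e * N e $ a $ d)"
    by (subst sum.swap) (simp add: symmetric_component[OF S])
  moreover have "(\<Sum>a\<in>UNIV. \<Sum>e\<in>UNIV. S $ a $ e * N d $ e $ a) = trace (S ** N d)"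
    by (simp add: trace_def matrix_mult_component)
  ultimately show ?thesis
    unfolding M_def by (simp add: ring_distribs sum.distrib sum_subtractf)
qed

lemma M_contract_last:
  assumes S: "transpose S = S"
  shows "(\<Sum>c\<in>UNIV. \<Sum>b\<in>UNIV. M a c b * S $ c $ b) = 2 * div_N S $ a - trace (S ** N a)"
proof -
  have "(\<Sum>c\<in>UNIV. \<Sum>b\<in>UNIV. N c $ a $ b * S $ c $ b) = div_N S $ a"
    unfolding div_N_def by (simp add: matrix_mult_component symmetric_component[OF S])
  moreover have "(\<Sum>c\<in>UNIV. \<Sum>b\<in>UNIV. N b $ a $ c * S $ c $ b) = div_N S $ a"
    unfolding div_N_def by (subst sum.swap) (simp add: matrix_mult_component symmetric_component[OF S])
  moreover have "(\<Sum>c\<in>UNIV. \<Sum>b\<in>UNIV. N a $ c $ b * S $ c $ b) = trace (S ** N a)"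
    using sum_product_symmetric_eq_trace[OF N_sym[of a], of S] by (simp add: mult.commute)
  ultimately show ?thesis
    unfolding M_def by (simp add: ring_distribs sum.distrib sum_subtractf)
qed

lemma M_contract_raised_P:
  "(\<Sum>a\<in>UNIV. \<Sum>d\<in>UNIV. (\<Sum>e\<in>UNIV. X $ b $ e * M e a d) * (gi ** P ** gi) $ a $ d)
     = (\<Sum>e\<in>UNIV. X $ b $ e * E $ e)"
proof -
  have "(\<Sum>a\<in>UNIV. \<Sum>d\<in>UNIV. (\<Sum>e\<in>UNIV. X $ b $ e * M e a d) * (gi ** P ** gi) $ a $ d)
      = (\<Sum>a\<in>UNIV. \<Sum>d\<in>UNIV. \<Sum>e\<in>UNIV. X $ b $ e * (M e a d * (gi ** P ** gi) $ a $ d))"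
    by (simp add: sum_distrib_right mult.assoc)
  also have "\<dots> = (\<Sum>a\<in>UNIV. \<Sum>e\<in>UNIV. \<Sum>d\<in>UNIV. X $ b $ e * (M e a d * (gi ** P ** gi) $ a $ d))"
    by (rule sum.cong[OF refl]) (rule sum.swap)
  also have "\<dots> = (\<Sum>e\<in>UNIV. \<Sum>a\<in>UNIV. \<Sum>d\<in>UNIV. X $ b $ e * (M e a d * (gi ** P ** gi) $ a $ d))"
    by (rule sum.swap)
  finally show ?thesis
    by (simp add: E_def sum_distrib_left)
qed

lemma E_eq: "E = 2 *\<^sub>R div_N (gi ** P ** gi)"
  unfolding E_def by (simp add: vec_eq_iff M_contract_last raised_P_sym trace_raised_P_N)

lemma W_eq: "W = (- 2) *\<^sub>R div_N (gi ** Q ** gi)"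
  unfolding W_def by (simp add: vec_eq_iff M_contract_last raised_Q_sym trace_raised_Q_N)

lemma div_N_vector_matrix: "div_N S v* A = (\<chi> d. \<Sum>c\<in>UNIV. (transpose A ** N c ** S) $ d $ c)"
proof -
  have "(div_N S v* A) $ d = (\<Sum>c\<in>UNIV. \<Sum>a\<in>UNIV. A $ a $ d * (N c ** S) $ a $ c)" for d
    unfolding vector_matrix_mult_def div_N_def
    by (simp add: mult.commute sum_distrib_left) (rule sum.swap)
  thus ?thesis
    by (simp add: vec_eq_iff matrix_mult_component transpose_component matrix_mul_assoc[symmetric])
qed

lemma div_N_add: "div_N (S + T) = div_N S + div_N T"
  by (simp add: div_N_def vec_eq_iff matrix_add_ldistrib sum.distrib)

lemma E_gi_P: "E v* (gi ** P) = 0"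
  by (simp add: E_eq scaleR_vector_matrix_assoc div_N_vector_matrix matrix_transpose_mul
      gi_sym P_sym matrix_mul_assoc sandwich_simps P_N_P vec_eq_iff)

lemma E_raised_P: "E v* (gi ** P ** gi) = 0"
  by (simp add: E_eq scaleR_vector_matrix_assoc div_N_vector_matrix raised_P_sym
      matrix_mul_assoc sandwich_simps vec_eq_iff)

lemma W_gi_Q: "W v* (gi ** Q) = 0"
  unfolding W_eq scaleR_vector_matrix_assoc
  by (simp add: div_N_vector_matrix matrix_transpose_mul
      gi_sym Q_sym matrix_mul_assoc sandwich_simps Q_N_Q vec_eq_iff)

lemma W_raised_Q: "W v* (gi ** Q ** gi) = 0"
  unfolding W_eq scaleR_vector_matrix_assoc
  by (simp add: div_N_vector_matrix raised_Q_sym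
      matrix_mul_assoc sandwich_simps vec_eq_iff)

lemma E_raised_Q: "E v* (gi ** Q ** gi) = E v* gi"
proof -
  have "gi ** Q ** gi = gi - gi ** P ** gi" using raised_P_add_raised_Q by (simp add: algebra_simps)
  thus ?thesis by (simp add: vector_matrix_mult_diff_rdistrib E_raised_P)
qed

lemma W_raised_P: "W v* (gi ** P ** gi) = W v* gi"
proof -
  have "gi ** P ** gi = gi - gi ** Q ** gi" using raised_P_add_raised_Q by (simp add: algebra_simps)
  thus ?thesis by (simp add: vector_matrix_mult_diff_rdistrib W_raised_Q)
qed

lemma W_gi_P: "W v* (gi ** P) = W"
proof -
  have "gi ** P = mat 1 - gi ** Q" using gi_P_add_gi_Q by (simp add: algebra_simps)
  thus ?thesis by (simp add: vector_matrix_mult_diff_rdistrib W_gi_Q)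
qed

lemma div_N_gi: "div_N gi $ a = (E $ a - W $ a) / 2"
  using div_N_add[of "gi ** P ** gi" "gi ** Q ** gi"]
  by (simp add: raised_P_add_raised_Q E_eq W_eq)

lemma sum_gi_N: "(\<Sum>a\<in>UNIV. (gi ** N a) $ a $ b) = (E $ b - W $ b) / 2"
proof -
  have "(\<Sum>a\<in>UNIV. (gi ** N a) $ a $ b) = div_N gi $ b"
    unfolding div_N_def matrix_mult_component vec_lambda_beta
    by (intro sum.cong refl)
       (simp add: symmetric_component[OF gi_sym] symmetric_component[OF N_sym, of _ b] mult.commute)
  thus ?thesis by (simp add: div_N_gi)
qed

lemma sum_raised_N: "(\<Sum>a\<in>UNIV. (gi ** N a ** gi) $ a $ b) = ((E - W) v* gi) $ b / 2"
proof -
  have "(\<Sum>a\<in>UNIV. (gi ** N a ** gi) $ a $ b) = (\<Sum>l\<in>UNIV. (\<Sum>a\<in>UNIV. (gi ** N a) $ a $ l) * gi $ l $ b)"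
    unfolding matrix_mult_component[of "gi ** N _" gi] sum_distrib_right by (rule sum.swap)
  thus ?thesis
    by (simp add: sum_gi_N vector_matrix_mult_def sum_divide_distrib mult.commute)
qed

definition L :: "'n \<Rightarrow> 'n \<Rightarrow> 'n \<Rightarrow> real" where
  "L a b c = (1 / (2 * p)) * (E $ b * (gi ** P) $ a $ c + E $ c * (gi ** P) $ a $ b)
   + (1 / (2 * (real CARD('n) - p))) * (W $ b * (gi ** Q) $ a $ c + W $ c * (gi ** Q) $ a $ b)
   + (1/2) * (\<Sum>q\<in>UNIV. ((gi ** P) $ a $ q - (gi ** Q) $ a $ q) * (\<Sum>d\<in>UNIV. gi $ q $ d * M d b c))"

lemma L_split:
  "L a b c = sym_prod E (gi ** P) a b c / (2 * p)
     + sym_prod W (gi ** Q) a b c / (2 * (real CARD('n) - p))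
     + (\<Sum>e\<in>UNIV. (gi ** P ** gi - gi ** Q ** gi) $ a $ e * M e b c) / 2"
proof -
  have "(\<Sum>q\<in>UNIV. ((gi ** P) $ a $ q - (gi ** Q) $ a $ q) * (\<Sum>d\<in>UNIV. gi $ q $ d * M d b c))
      = (\<Sum>e\<in>UNIV. (gi ** P ** gi - gi ** Q ** gi) $ a $ e * M e b c)"
    unfolding matrix_diff_rdistrib[symmetric] matrix_mult_component[of "gi ** P - gi ** Q" gi]
    by (simp add: sum_distrib_left sum_distrib_right mult_ac) (rule sum.swap)
  thus ?thesis unfolding L_def sym_prod_def by simp
qed

lemma L_sym: "L a b c = L a c b"
  unfolding L_def using M_sym by (simp add: algebra_simps)

lemma raised_P_diff_Q_sym: "transpose (gi ** P ** gi - gi ** Q ** gi) = gi ** P ** gi - gi ** Q ** gi"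
  by (simp add: transpose_diff raised_P_sym raised_Q_sym)

lemma L_trace: "(\<Sum>a\<in>UNIV. L a a d) = (E $ d + W $ d) / 2"
proof -
  have "(\<Sum>a\<in>UNIV. L a a d) = (\<Sum>a\<in>UNIV. sym_prod E (gi ** P) a a d) / (2 * p)
      + (\<Sum>a\<in>UNIV. sym_prod W (gi ** Q) a a d) / (2 * (real CARD('n) - p))
      + (\<Sum>a\<in>UNIV. \<Sum>e\<in>UNIV. (gi ** P ** gi - gi ** Q ** gi) $ a $ e * M e a d) / 2"
    by (simp add: L_split sum.distrib sum_divide_distrib)
  also have "\<dots> = (E $ d + W $ d) / 2"
    unfolding sum_sym_prod_trace M_contract_first[OF raised_P_diff_Q_sym]
    using p_pos p_less
    by (simp add: E_gi_P W_gi_Q trace_P trace_Q matrix_diff_rdistrib trace_sub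
        trace_raised_P_N trace_raised_Q_N field_simps)
  finally show ?thesis .
qed

lemma L_contract_raised_P: "(\<Sum>a\<in>UNIV. \<Sum>d\<in>UNIV. L b a d * (gi ** P ** gi) $ a $ d) = - (E v* gi) $ b / 2"
proof -
  let ?R = "gi ** P ** gi - gi ** Q ** gi"
  have M_part: "(\<Sum>a\<in>UNIV. \<Sum>d\<in>UNIV. (\<Sum>e\<in>UNIV. ?R $ b $ e * M e a d) * (gi ** P ** gi) $ a $ d)
      = (E v* ?R) $ b"
  proof -
    have "(\<Sum>a\<in>UNIV. \<Sum>d\<in>UNIV. (\<Sum>e\<in>UNIV. ?R $ b $ e * M e a d) * (gi ** P ** gi) $ a $ d)
        = (\<Sum>e\<in>UNIV. ?R $ b $ e * E $ e)"
      by (rule M_contract_raised_P)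
    also have "\<dots> = (E v* ?R) $ b"
      unfolding vector_matrix_mult_def vec_lambda_beta
      by (rule sum.cong[OF refl]) (metis symmetric_component[OF raised_P_diff_Q_sym] mult.commute)
    finally show ?thesis .
  qed
  have raised_P_E: "(gi ** P ** gi) *v E = 0"
    by (metis E_raised_P raised_P_sym vector_transpose_matrix)
  have "(\<Sum>a\<in>UNIV. \<Sum>d\<in>UNIV. L b a d * (gi ** P ** gi) $ a $ d)
      = (\<Sum>a\<in>UNIV. \<Sum>d\<in>UNIV. sym_prod E (gi ** P) b a d * (gi ** P ** gi) $ a $ d) / (2 * p)
      + (\<Sum>a\<in>UNIV. \<Sum>d\<in>UNIV. sym_prod W (gi ** Q) b a d * (gi ** P ** gi) $ a $ d) / (2 * (real CARD('n) - p))
      + (\<Sum>a\<in>UNIV. \<Sum>d\<in>UNIV. (\<Sum>e\<in>UNIV. ?R $ b $ e * M e a d) * (gi ** P ** gi) $ a $ d) / 2"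
    by (simp only: L_split distrib_right times_divide_eq_left sum.distrib sum_divide_distrib[symmetric])
  also have "\<dots> = - (E v* gi) $ b / 2"
    unfolding sum_sym_prod_contract_lower[OF raised_P_sym] M_part
    by (simp add: matrix_mul_assoc projector_simps raised_P_E vector_matrix_mult_diff_rdistrib
        E_raised_P E_raised_Q)
  finally show ?thesis .
qed

lemma L_contract_mixed_P: "(\<Sum>a\<in>UNIV. \<Sum>d\<in>UNIV. L d a b * (gi ** P) $ a $ d) = E $ b / 2"
proof -
  let ?R = "gi ** P ** gi - gi ** Q ** gi"
  have M_part: "(\<Sum>a\<in>UNIV. \<Sum>d\<in>UNIV. (\<Sum>e\<in>UNIV. ?R $ d $ e * M e a b) * (gi ** P) $ a $ d) = 0"
  proof -
    have "gi ** P ** ?R = gi ** P ** gi"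
      by (simp add: matrix_algebra_simps projector_simps)
    thus ?thesis
      unfolding sum_matrix_mult_contract
      by (simp add: M_contract_first[OF raised_P_sym] trace_raised_P_N)
  qed
  have "(\<Sum>a\<in>UNIV. \<Sum>d\<in>UNIV. L d a b * (gi ** P) $ a $ d)
      = (\<Sum>a\<in>UNIV. \<Sum>d\<in>UNIV. sym_prod E (gi ** P) d a b * (gi ** P) $ a $ d) / (2 * p)
      + (\<Sum>a\<in>UNIV. \<Sum>d\<in>UNIV. sym_prod W (gi ** Q) d a b * (gi ** P) $ a $ d) / (2 * (real CARD('n) - p))
      + (\<Sum>a\<in>UNIV. \<Sum>d\<in>UNIV. (\<Sum>e\<in>UNIV. ?R $ d $ e * M e a b) * (gi ** P) $ a $ d) / 2"
    by (simp only: L_split distrib_right times_divide_eq_left sum.distrib sum_divide_distrib[symmetric])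
  also have "\<dots> = E $ b / 2"
    unfolding sum_sym_prod_contract_upper M_part
    using p_pos
    by (simp add: matrix_mul_assoc projector_simps E_gi_P trace_P) (simp add: trace_def)
  finally show ?thesis .
qed

lemma L_trace_contract: "(\<Sum>a\<in>UNIV. \<Sum>d\<in>UNIV. L a a d * S $ d $ b) = ((E + W) v* S) $ b / 2"
proof -
  have "(\<Sum>a\<in>UNIV. \<Sum>d\<in>UNIV. L a a d * S $ d $ b) = (\<Sum>d\<in>UNIV. (\<Sum>a\<in>UNIV. L a a d) * S $ d $ b)"
    unfolding sum_distrib_right by (rule sum.swap)
  thus ?thesis
    by (simp add: L_trace vector_matrix_mult_def sum_divide_distrib)
qed

lemma div_raised_P:
  "(\<Sum>a\<in>UNIV. (gi ** N a ** gi) $ a $ b + (\<Sum>d\<in>UNIV. L a a d * (gi ** P ** gi) $ d $ b)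
     + (\<Sum>d\<in>UNIV. L b a d * (gi ** P ** gi) $ a $ d)) = 0"
  by (simp add: sum.distrib sum_raised_N L_trace_contract L_contract_raised_P
      vector_matrix_left_distrib vector_matrix_mult_diff_distrib E_raised_P W_raised_P)
     (simp add: field_simps)

lemma div_mixed_P:
  "(\<Sum>a\<in>UNIV. (gi ** N a) $ a $ b + (\<Sum>d\<in>UNIV. L a a d * (gi ** P) $ d $ b)
     - (\<Sum>d\<in>UNIV. L d a b * (gi ** P) $ a $ d)) = 0"
  by (simp add: sum.distrib sum_subtractf sum_gi_N L_trace_contract L_contract_mixed_P
      vector_matrix_left_distrib E_gi_P W_gi_P)
     (simp add: field_simps)

lemma raised_P_contract_cov_P:
  "(\<Sum>b\<in>UNIV. \<Sum>c\<in>UNIV. (gi ** P ** gi) $ b $ c * (N a $ b $ c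
      - (\<Sum>d\<in>UNIV. L d a b * P $ d $ c) - (\<Sum>d\<in>UNIV. L d a c * P $ b $ d))) = - E $ a"
proof -
  have N_part: "(\<Sum>b\<in>UNIV. \<Sum>c\<in>UNIV. (gi ** P ** gi) $ b $ c * N a $ b $ c) = 0"
    by (simp add: sum_product_symmetric_eq_trace[OF N_sym] trace_raised_P_N)
  have "(\<Sum>b\<in>UNIV. \<Sum>c\<in>UNIV. (gi ** P ** gi) $ b $ c * (\<Sum>d\<in>UNIV. L d a c * P $ b $ d))
      = (\<Sum>c\<in>UNIV. \<Sum>b\<in>UNIV. (gi ** P ** gi) $ c $ b * (\<Sum>d\<in>UNIV. L d a c * P $ b $ d))"
    by (subst sum.swap) (simp add: symmetric_component[OF raised_P_sym])
  also have "\<dots> = (\<Sum>b\<in>UNIV. \<Sum>c\<in>UNIV. (gi ** P ** gi) $ b $ c * (\<Sum>d\<in>UNIV. L d a b * P $ d $ c))"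
    by (simp add: symmetric_component[OF P_sym])
  finally have same: "(\<Sum>b\<in>UNIV. \<Sum>c\<in>UNIV. (gi ** P ** gi) $ b $ c * (\<Sum>d\<in>UNIV. L d a c * P $ b $ d))
      = (\<Sum>b\<in>UNIV. \<Sum>c\<in>UNIV. (gi ** P ** gi) $ b $ c * (\<Sum>d\<in>UNIV. L d a b * P $ d $ c))" .
  have "(\<Sum>b\<in>UNIV. \<Sum>c\<in>UNIV. (gi ** P ** gi) $ b $ c * (\<Sum>d\<in>UNIV. L d a b * P $ d $ c))
      = (\<Sum>b\<in>UNIV. \<Sum>c\<in>UNIV. (gi ** P ** gi) $ b $ c * (\<Sum>d\<in>UNIV. L d b a * P $ c $ d))"
    by (simp add: symmetric_component[OF P_sym] L_sym[of _ a])
  also have "\<dots> = E $ a / 2"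
    unfolding sum_contract_matrix_mult
    by (simp add: matrix_mul_assoc projector_simps L_contract_mixed_P)
  finally have L_part: "(\<Sum>b\<in>UNIV. \<Sum>c\<in>UNIV. (gi ** P ** gi) $ b $ c * (\<Sum>d\<in>UNIV. L d a b * P $ d $ c))
      = E $ a / 2" .
  show ?thesis
    using N_part same L_part by (simp add: right_diff_distrib sum_subtractf)
qed

lemma raised_P_contract_cov_P_first:
  "(\<Sum>d\<in>UNIV. \<Sum>r\<in>UNIV. (gi ** P ** gi) $ d $ r * (N d $ r $ b
      - (\<Sum>e\<in>UNIV. L e d r * P $ e $ b) - (\<Sum>e\<in>UNIV. L e d b * P $ r $ e))) = 0"
proof -
  have N_part: "(\<Sum>d\<in>UNIV. \<Sum>r\<in>UNIV. (gi ** P ** gi) $ d $ r * N d $ r $ b) = E $ b / 2"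
  proof -
    have "(\<Sum>d\<in>UNIV. \<Sum>r\<in>UNIV. (gi ** P ** gi) $ d $ r * N d $ r $ b) = div_N (gi ** P ** gi) $ b"
      unfolding div_N_component
      by (intro sum.cong refl)
         (metis symmetric_component[OF raised_P_sym] symmetric_component[OF N_sym] mult.commute)
    thus ?thesis by (simp add: E_eq)
  qed
  have first_L_part: "(\<Sum>d\<in>UNIV. \<Sum>r\<in>UNIV. (gi ** P ** gi) $ d $ r * (\<Sum>e\<in>UNIV. L e d r * P $ e $ b)) = 0"
  proof -
    have "(\<Sum>d\<in>UNIV. \<Sum>r\<in>UNIV. (gi ** P ** gi) $ d $ r * (\<Sum>e\<in>UNIV. L e d r * P $ e $ b))
        = (\<Sum>e\<in>UNIV. (\<Sum>d\<in>UNIV. \<Sum>r\<in>UNIV. L e d r * (gi ** P ** gi) $ d $ r) * P $ e $ b)"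
      unfolding sum_triple_swap by (simp add: sum_distrib_left sum_distrib_right mult_ac)
    also have "\<dots> = - ((E v* gi) v* P) $ b / 2"
      unfolding L_contract_raised_P vector_matrix_mult_def[of "E v* gi"] vec_lambda_beta
      by (simp add: sum_divide_distrib sum_negf mult.commute)
    also have "\<dots> = - (E v* (gi ** P)) $ b / 2"
      by (simp add: vector_matrix_mul_assoc)
    finally show ?thesis by (simp add: E_gi_P)
  qed
  have second_L_part: "(\<Sum>d\<in>UNIV. \<Sum>r\<in>UNIV. (gi ** P ** gi) $ d $ r * (\<Sum>e\<in>UNIV. L e d b * P $ r $ e))
      = E $ b / 2"
    unfolding sum_contract_matrix_mult
    by (simp add: matrix_mul_assoc projector_simps L_contract_mixed_P)
  show ?thesis
    using N_part first_L_part second_L_part by (simp add: right_diff_distrib sum_subtractf)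
qed

end

section \<open>Partial derivatives of matrix fields\<close>

lemma pd_has_derivative: "(f has_derivative f') (at x) \<Longrightarrow> pd f c x = f' (axis c 1)"
  unfolding pd_def by (metis frechet_derivative_at)

lemma pd_diff:
  assumes "f differentiable (at x)" "h differentiable (at x)"
  shows "pd (\<lambda>y. f y - h y) c x = pd f c x - pd h c x"
  using pd_has_derivative[OF has_derivative_diff[OF assms[unfolded frechet_derivative_works]]]
  by (simp add: pd_def)

lemma pd_mult:
  assumes "f differentiable (at x)" "h differentiable (at x)"
  shows "pd (\<lambda>y. f y * h y) c x = f x * pd h c x + pd f c x * h x"
  using pd_has_derivative[OF has_derivative_mult[OF assms[unfolded frechet_derivative_works]]]
  by (simp add: pd_def)

lemma pd_sum:
  assumes "finite S" "\<And>i. i \<in> S \<Longrightarrow> f i differentiable (at x)"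
  shows "pd (\<lambda>y. \<Sum>i\<in>S. f i y) c x = (\<Sum>i\<in>S. pd (f i) c x)"
proof -
  have "((\<lambda>y. \<Sum>i\<in>S. f i y) has_derivative (\<lambda>v. \<Sum>i\<in>S. frechet_derivative (f i) (at x) v)) (at x)"
    by (rule has_derivative_sum) (use assms(2) frechet_derivative_works in blast)
  from pd_has_derivative[OF this] show ?thesis by (simp add: pd_def)
qed

lemma pd_const: "pd (\<lambda>y. k) c x = 0"
  using pd_has_derivative[OF has_derivative_const[of k "at x"]] by simp

lemma pd_transform_within_open:
  assumes "open V" "x \<in> V" "\<And>y. y \<in> V \<Longrightarrow> f y = h y" "f differentiable (at x)"
  shows "pd f c x = pd h c x"
  unfolding pd_def using frechet_derivative_transform_within_open[OF assms(4,1,2,3)] by simp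

lemma differentiable_transform_within_open:
  assumes "open V" "x \<in> V" "\<And>y. y \<in> V \<Longrightarrow> f y = h y" "f differentiable (at x)"
  shows "h differentiable (at x)"
  using assms has_derivative_transform_within_open unfolding differentiable_def by blast

lemma differentiable_prod:
  assumes "finite S" "\<And>i. i \<in> S \<Longrightarrow> f i differentiable (at x)"
  shows "(\<lambda>y. \<Prod>i\<in>S. (f i y :: real)) differentiable (at x)"
proof -
  have "((\<lambda>y. \<Prod>i\<in>S. f i y) has_derivative
      (\<lambda>v. \<Sum>i\<in>S. frechet_derivative (f i) (at x) v * (\<Prod>j\<in>S - {i}. f j x))) (at x)"
    by (rule has_derivative_prod) (use assms(2) frechet_derivative_works in blast)
  thus ?thesis unfolding differentiable_def by blast
qed

lemma det_differentiable:
  assumes "\<And>i j. (\<lambda>y. F y $ i $ j) differentiable (at x)"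
  shows "(\<lambda>y. det (F y :: real^'n::finite^'n)) differentiable (at x)"
  unfolding det_def
  by (rule differentiable_sum)
     (auto intro!: differentiable_mult differentiable_prod assms simp: finite_permutations)

definition entrywise_differentiable :: "(real^'n \<Rightarrow> real^'n::finite^'n) \<Rightarrow> real^'n \<Rightarrow> bool" where
  "entrywise_differentiable F x = (\<forall>i j. (\<lambda>y. F y $ i $ j) differentiable (at x))"

definition pd_matrix :: "(real^'n \<Rightarrow> real^'n::finite^'n) \<Rightarrow> 'n \<Rightarrow> real^'n \<Rightarrow> real^'n^'n" where
  "pd_matrix F c x = (\<chi> i j. pd (\<lambda>y. F y $ i $ j) c x)"

lemma entrywise_differentiable_mult:
  "entrywise_differentiable A x \<Longrightarrow> entrywise_differentiable B x
    \<Longrightarrow> entrywise_differentiable (\<lambda>y. A y ** B y) x"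
  unfolding entrywise_differentiable_def matrix_matrix_mult_def by simp

lemma entrywise_differentiable_diff:
  "entrywise_differentiable A x \<Longrightarrow> entrywise_differentiable B x
    \<Longrightarrow> entrywise_differentiable (\<lambda>y. A y - B y) x"
  unfolding entrywise_differentiable_def by simp

lemma pd_matrix_mult:
  assumes A: "entrywise_differentiable A x" and B: "entrywise_differentiable B x"
  shows "pd_matrix (\<lambda>y. A y ** B y) c x = pd_matrix A c x ** B x + A x ** pd_matrix B c x"
proof -
  have dA: "(\<lambda>y. A y $ i $ j) differentiable (at x)" for i j
    using A unfolding entrywise_differentiable_def by blast
  have dB: "(\<lambda>y. B y $ i $ j) differentiable (at x)" for i j
    using B unfolding entrywise_differentiable_def by blast
  have "pd (\<lambda>y. \<Sum>k\<in>UNIV. A y $ i $ k * B y $ k $ j) c x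
      = (\<Sum>k\<in>UNIV. A x $ i $ k * pd (\<lambda>y. B y $ k $ j) c x + pd (\<lambda>y. A y $ i $ k) c x * B x $ k $ j)"
    for i j
  proof -
    have "pd (\<lambda>y. \<Sum>k\<in>UNIV. A y $ i $ k * B y $ k $ j) c x
        = (\<Sum>k\<in>UNIV. pd (\<lambda>y. A y $ i $ k * B y $ k $ j) c x)"
      by (rule pd_sum) (auto intro: differentiable_mult dA dB)
    thus ?thesis by (simp add: pd_mult[OF dA dB])
  qed
  thus ?thesis
    unfolding pd_matrix_def matrix_matrix_mult_def by (simp add: vec_eq_iff sum.distrib)
qed

lemma pd_matrix_diff:
  "entrywise_differentiable A x \<Longrightarrow> entrywise_differentiable B x
    \<Longrightarrow> pd_matrix (\<lambda>y. A y - B y) c x = pd_matrix A c x - pd_matrix B c x"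
  unfolding entrywise_differentiable_def pd_matrix_def by (simp add: vec_eq_iff pd_diff)

lemma pd_matrix_const: "pd_matrix (\<lambda>y. K) c x = 0"
  unfolding pd_matrix_def by (simp add: vec_eq_iff pd_const)

lemma pd_matrix_transform_within_open:
  assumes "open V" "x \<in> V" "\<And>y. y \<in> V \<Longrightarrow> A y = B y" "entrywise_differentiable A x"
  shows "pd_matrix A c x = pd_matrix B c x"
proof -
  have "pd (\<lambda>y. A y $ i $ j) c x = pd (\<lambda>y. B y $ i $ j) c x" for i j
    by (rule pd_transform_within_open[OF assms(1,2)])
       (use assms(3,4) in \<open>auto simp: entrywise_differentiable_def\<close>)
  thus ?thesis unfolding pd_matrix_def by (simp add: vec_eq_iff)
qed

lemma entrywise_differentiable_transform_within_open:
  assumes "open V" "x \<in> V" "\<And>y. y \<in> V \<Longrightarrow> A y = B y" "entrywise_differentiable A x"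
  shows "entrywise_differentiable B x"
  unfolding entrywise_differentiable_def
proof (intro allI)
  fix i j
  show "(\<lambda>y. B y $ i $ j) differentiable (at x)"
    by (rule differentiable_transform_within_open[OF assms(1,2), of "\<lambda>y. A y $ i $ j"])
       (use assms(3,4) in \<open>auto simp: entrywise_differentiable_def\<close>)
qed

lemma smooth_tfield_entrywise_differentiable:
  assumes "smooth_tfield U T" "x \<in> U"
  shows "entrywise_differentiable T x"
proof -
  have "Ck_on (Suc 0) U (\<lambda>y. T y $ i $ j)" for i j
    using assms(1) unfolding smooth_tfield_def smooth_on_def by blast
  thus ?thesis using assms(2) unfolding entrywise_differentiable_def by simp
qed

section \<open>Covariant derivatives in matrix form\<close>

definition conn_matrix :: "'n conn \<Rightarrow> real^'n \<Rightarrow> 'n \<Rightarrow> real^'n::finite^'n" where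
  "conn_matrix G x a = (\<chi> d b. G x d a b)"

lemma cov02_matrix:
  "cov02 G T x a b c
     = (pd_matrix T a x - transpose (conn_matrix G x a) ** T x - T x ** conn_matrix G x a) $ b $ c"
  unfolding cov02_def pd_matrix_def conn_matrix_def
  by (simp add: matrix_mult_component transpose_component mult.commute)

lemma cov20_matrix:
  "cov20 G T x a b c
     = (pd_matrix T a x + conn_matrix G x a ** T x + T x ** transpose (conn_matrix G x a)) $ b $ c"
  unfolding cov20_def pd_matrix_def conn_matrix_def
  by (simp add: matrix_mult_component transpose_component mult.commute)

lemma cov11_matrix:
  "cov11 G T x a b c
     = (pd_matrix T a x + conn_matrix G x a ** T x - T x ** conn_matrix G x a) $ b $ c"
  unfolding cov11_def pd_matrix_def conn_matrix_def
  by (simp add: matrix_mult_component transpose_component mult.commute)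

lemma up1_eq: "up1 g T x = ginv g x ** T x"
  unfolding up1_def by (simp add: matrix_matrix_mult_def)

lemma cov_contraction_leibniz:
  assumes T: "entrywise_differentiable T x" and S: "entrywise_differentiable S x"
  shows "(\<Sum>b\<in>UNIV. \<Sum>c\<in>UNIV. T x $ b $ c * cov20 G S x a b c)
       + (\<Sum>b\<in>UNIV. \<Sum>c\<in>UNIV. S x $ b $ c * cov02 G T x a b c)
       = pd (\<lambda>y. \<Sum>b\<in>UNIV. \<Sum>c\<in>UNIV. T y $ b $ c * S y $ b $ c) a x"
proof -
  let ?G = "conn_matrix G x a"
  have dT: "(\<lambda>y. T y $ i $ j) differentiable (at x)" for i j
    using T unfolding entrywise_differentiable_def by blast
  have dS: "(\<lambda>y. S y $ i $ j) differentiable (at x)" for i j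
    using S unfolding entrywise_differentiable_def by blast
  have "pd (\<lambda>y. \<Sum>b\<in>UNIV. \<Sum>c\<in>UNIV. T y $ b $ c * S y $ b $ c) a x
      = (\<Sum>b\<in>UNIV. \<Sum>c\<in>UNIV. T x $ b $ c * pd_matrix S a x $ b $ c + S x $ b $ c * pd_matrix T a x $ b $ c)"
    by (simp add: pd_sum differentiable_sum differentiable_mult dT dS pd_mult pd_matrix_def mult.commute add.commute)
  also have "\<dots> = trace (transpose (T x) ** pd_matrix S a x) + trace (transpose (S x) ** pd_matrix T a x)"
    by (simp add: sum.distrib sum_product_eq_trace)
  finally have pd_part: "pd (\<lambda>y. \<Sum>b\<in>UNIV. \<Sum>c\<in>UNIV. T y $ b $ c * S y $ b $ c) a x
      = trace (transpose (T x) ** pd_matrix S a x) + trace (transpose (S x) ** pd_matrix T a x)" .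
  have "trace (transpose (S x) ** transpose ?G ** T x) = trace (transpose (T x) ** ?G ** S x)"
    by (metis matrix_transpose_mul trace_transpose transpose_transpose matrix_mul_assoc)
  moreover have "trace (transpose (S x) ** T x ** ?G) = trace (transpose (T x) ** S x ** transpose ?G)"
    by (metis matrix_transpose_mul trace_transpose transpose_transpose matrix_mul_assoc trace_mul_sym)
  ultimately show ?thesis
    unfolding pd_part unfolding cov20_matrix cov02_matrix sum_product_eq_trace
    by (simp add: matrix_add_ldistrib matrix_diff_ldistrib trace_add trace_sub matrix_mul_assoc)
qed

text \<open>Differentiating \<open>B\<^sup>2 = B\<close> gives \<open>\<partial>B = (\<partial>B) B + B \<partial>B\<close>, and the connection enters only through
  the commutator \<open>[\<Gamma>, B]\<close>.\<close>

lemma trace_cov11_idempotent: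
  assumes V: "open V" "x \<in> V" and idem: "\<forall>y\<in>V. B y ** B y = B y"
    and B: "entrywise_differentiable B x" and AB: "A ** B x = 0" and BA: "B x ** A = 0"
  shows "(\<Sum>d\<in>UNIV. \<Sum>r\<in>UNIV. A $ d $ r * cov11 G B x b r d) = 0"
proof -
  let ?G = "conn_matrix G x b" and ?D = "pd_matrix B b x"
  have "pd_matrix (\<lambda>y. B y ** B y) b x = ?D"
    by (rule pd_matrix_transform_within_open[OF V])
       (use idem B in \<open>auto intro: entrywise_differentiable_mult\<close>)
  hence D: "?D = ?D ** B x + B x ** ?D" by (simp add: pd_matrix_mult B)
  have trace_A_B: "trace (A ** X ** B x) = 0" for X
  proof -
    have "trace (A ** X ** B x) = trace (B x ** A ** X)"
      by (metis trace_mul_sym matrix_mul_assoc)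
    thus ?thesis by (simp add: BA trace_def)
  qed
  have "trace (A ** (?D + ?G ** B x - B x ** ?G))
      = trace (A ** ?D ** B x) + trace (A ** B x ** ?D) + trace (A ** ?G ** B x) - trace (A ** B x ** ?G)"
    by (subst D) (simp add: matrix_add_ldistrib matrix_diff_ldistrib trace_add trace_sub matrix_mul_assoc)
  also have "\<dots> = 0"
    by (simp add: trace_A_B AB)
  finally show ?thesis
    unfolding cov11_matrix by (simp add: trace_def matrix_mult_component)
qed

section \<open>The Levi-Civita connection\<close>

lemma inverse_cancel:
  "(A::'a::semiring_1^'n^'n) ** B = mat 1 \<Longrightarrow> X ** A ** B = X"
  by (metis matrix_mul_assoc matrix_mul_rid)

lemma raise_both_indices_algebra:
  fixes gi g T DT G :: "real^'n::finite^'n"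
  assumes "gi ** g = mat 1" "g ** gi = mat 1"
  shows "(- (gi ** (transpose G ** g + g ** G) ** gi) ** T + gi ** DT) ** gi
     + gi ** T ** (- (gi ** (transpose G ** g + g ** G) ** gi))
     + G ** (gi ** T ** gi) + gi ** T ** gi ** transpose G
     = gi ** (DT - transpose G ** T - T ** G) ** gi"
  using assms
  by (simp add: matrix_algebra_simps inverse_cancel[OF assms(1)] inverse_cancel[OF assms(2)] algebra_simps)

lemma raise_first_index_algebra:
  fixes gi g T DT G :: "real^'n::finite^'n"
  assumes "gi ** g = mat 1" "g ** gi = mat 1"
  shows "- (gi ** (transpose G ** g + g ** G) ** gi) ** T + gi ** DT
     + G ** (gi ** T) - gi ** T ** G
     = gi ** (DT - transpose G ** T - T ** G)"
  using assms
  by (simp add: matrix_algebra_simps inverse_cancel[OF assms(1)] inverse_cancel[OF assms(2)] algebra_simps)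

lemma idempotent_derivative_algebra:
  fixes gi g P DP G :: "real^'n::finite^'n"
  assumes "gi ** g = mat 1" "g ** gi = mat 1" "P ** gi ** P = P"
    and "DP = DP ** (gi ** P) + P ** (- (gi ** (transpose G ** g + g ** G) ** gi) ** P + gi ** DP)"
  shows "DP - transpose G ** P - P ** G
     = (DP - transpose G ** P - P ** G) ** gi ** P + P ** gi ** (DP - transpose G ** P - P ** G)"
proof -
  have idem: "X ** P ** gi ** P = X ** P" for X using assms(3) by (metis matrix_mul_assoc)
  have "DP = DP ** gi ** P + P ** gi ** DP - P ** gi ** transpose G ** P - P ** G ** gi ** P"
    using assms(4)
    by (simp add: matrix_algebra_simps inverse_cancel[OF assms(1)] inverse_cancel[OF assms(2)]
        algebra_simps)
  thus ?thesis
    using assms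
    by (simp add: matrix_algebra_simps inverse_cancel[OF assms(1)] inverse_cancel[OF assms(2)] idem
        algebra_simps)
qed

locale metric_chart =
  fixes U :: "(real^'n::finite) set" and g :: "'n tfield"
  assumes U_open: "open U" and g_smooth: "smooth_tfield U g"
    and g_sym: "\<forall>x\<in>U. transpose (g x) = g x" and g_nondeg: "\<forall>x\<in>U. invertible (g x)"
begin

lemma ginv_right: "x \<in> U \<Longrightarrow> g x ** ginv g x = mat 1"
  and ginv_left: "x \<in> U \<Longrightarrow> ginv g x ** g x = mat 1"
proof -
  assume "x \<in> U"
  hence "\<exists>A'. g x ** A' = mat 1 \<and> A' ** g x = mat 1"
    using g_nondeg unfolding invertible_def by blast
  hence "g x ** matrix_inv (g x) = mat 1 \<and> matrix_inv (g x) ** g x = mat 1"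
    unfolding matrix_inv_def by (rule someI_ex)
  thus "g x ** ginv g x = mat 1" "ginv g x ** g x = mat 1"
    unfolding ginv_def by auto
qed

lemma ginv_sym: assumes x: "x \<in> U" shows "transpose (ginv g x) = ginv g x"
proof -
  have "transpose (ginv g x) = transpose (ginv g x) ** (g x ** ginv g x)"
    using ginv_right[OF x] by simp
  also have "\<dots> = transpose (ginv g x) ** transpose (g x) ** ginv g x"
    using g_sym x by (simp add: matrix_mul_assoc)
  also have "transpose (ginv g x) ** transpose (g x) = mat 1"
    using ginv_right[OF x] by (metis matrix_transpose_mul transpose_mat)
  finally show ?thesis by simp
qed

lemma up2_eq: assumes x: "x \<in> U" shows "up2 g T x = ginv g x ** T x ** ginv g x"
  unfolding up2_def
  by (simp add: vec_eq_iff matrix_mult_component sum_distrib_left sum_distrib_right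
      symmetric_component[OF ginv_sym[OF x]] mult_ac)
     (subst sum.swap, simp add: mult_ac)

lemma g_entrywise_differentiable: "x \<in> U \<Longrightarrow> entrywise_differentiable g x"
  by (rule smooth_tfield_entrywise_differentiable[OF g_smooth])

text \<open>By Cramer's rule the entries of \<open>g\<^sup>-\<^sup>1\<close> are rational functions of those of \<open>g\<close>.\<close>

lemma ginv_cramer:
  assumes x: "x \<in> U"
  shows "ginv g x $ k $ j = det (\<chi> i l. if l = k then axis j 1 $ i else g x $ i $ l) / det (g x)"
proof -
  have d: "det (g x) \<noteq> 0" using g_nondeg x invertible_det_nz by blast
  have "g x *v (ginv g x *v axis j 1) = axis j 1"
    using ginv_right[OF x] by (simp add: matrix_vector_mul_assoc)
  hence "(ginv g x *v axis j 1) $ k = det (\<chi> i l. if l = k then axis j 1 $ i else g x $ i $ l) / det (g x)"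
    using cramer[OF d] by simp
  moreover have "(ginv g x *v axis j 1) $ k = ginv g x $ k $ j"
    by (simp add: matrix_vector_mult_def axis_def if_distrib cong: if_cong)
  ultimately show ?thesis by simp
qed

lemma ginv_entrywise_differentiable:
  assumes x: "x \<in> U" shows "entrywise_differentiable (ginv g) x"
  unfolding entrywise_differentiable_def
proof (intro allI)
  fix k j
  let ?F = "\<lambda>y. (\<chi> i l. if l = k then axis j 1 $ i else g y $ i $ l) :: real^'n^'n"
  have dg: "(\<lambda>y. g y $ i $ l) differentiable (at x)" for i l
    using g_entrywise_differentiable[OF x] unfolding entrywise_differentiable_def by blast
  have dF: "(\<lambda>y. ?F y $ i $ l) differentiable (at x)" for i l
    using dg by (cases "l = k") auto
  have quotient: "(\<lambda>y. det (?F y) / det (g y)) differentiable (at x)"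
    using g_nondeg x invertible_det_nz
    by (intro differentiable_divide det_differentiable dF dg) auto
  show "(\<lambda>y. ginv g y $ k $ j) differentiable (at x)"
    by (rule differentiable_transform_within_open[OF U_open x _ quotient]) (simp add: ginv_cramer)
qed

lemma pd_matrix_ginv:
  assumes x: "x \<in> U"
  shows "pd_matrix (ginv g) a x = - (ginv g x ** pd_matrix g a x ** ginv g x)"
proof -
  have "pd_matrix (\<lambda>y. ginv g y ** g y) a x = pd_matrix (\<lambda>y. mat 1) a x"
    by (rule pd_matrix_transform_within_open[OF U_open x])
       (auto simp: ginv_left intro: entrywise_differentiable_mult ginv_entrywise_differentiable
         g_entrywise_differentiable x)
  hence "pd_matrix (ginv g) a x ** g x + ginv g x ** pd_matrix g a x = 0"
    by (simp add: pd_matrix_mult ginv_entrywise_differentiable g_entrywise_differentiable x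
        pd_matrix_const)
  hence "(pd_matrix (ginv g) a x ** g x + ginv g x ** pd_matrix g a x) ** ginv g x = 0"
    by simp
  hence "pd_matrix (ginv g) a x + ginv g x ** pd_matrix g a x ** ginv g x = 0"
    by (simp add: matrix_add_rdistrib ginv_right[OF x] flip: matrix_mul_assoc)
  thus ?thesis by (simp add: eq_neg_iff_add_eq_0)
qed

lemma christoffel_lowered:
  assumes x: "x \<in> U"
  shows "(\<Sum>d\<in>UNIV. g x $ c $ d * christoffel g x d a b)
    = (pd (\<lambda>y. g y $ c $ b) a x + pd (\<lambda>y. g y $ c $ a) b x - pd (\<lambda>y. g y $ a $ b) c x) / 2"
proof -
  let ?F = "\<lambda>e. pd (\<lambda>y. g y $ e $ b) a x + pd (\<lambda>y. g y $ e $ a) b x - pd (\<lambda>y. g y $ a $ b) e x"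
  have "(\<Sum>d\<in>UNIV. g x $ c $ d * christoffel g x d a b)
      = (\<Sum>d\<in>UNIV. g x $ c $ d * (\<Sum>e\<in>UNIV. ginv g x $ d $ e * ?F e)) / 2"
    unfolding christoffel_def by (simp add: sum_distrib_left sum_divide_distrib mult_ac)
  also have "(\<Sum>d\<in>UNIV. g x $ c $ d * (\<Sum>e\<in>UNIV. ginv g x $ d $ e * ?F e))
      = (\<Sum>e\<in>UNIV. (g x ** ginv g x) $ c $ e * ?F e)"
    unfolding matrix_mult_component sum_distrib_left sum_distrib_right
    by (subst sum.swap) (simp add: mult.assoc)
  also have "\<dots> = (\<Sum>e\<in>UNIV. if c = e then ?F e else 0)"
    by (rule sum.cong[OF refl]) (simp add: ginv_right[OF x] mat_def)
  also have "\<dots> = ?F c" by simp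
  finally show ?thesis .
qed

lemma pd_metric_sym:
  assumes x: "x \<in> U" shows "pd (\<lambda>y. g y $ b $ c) a x = pd (\<lambda>y. g y $ c $ b) a x"
proof (rule pd_transform_within_open[OF U_open x])
  show "(\<lambda>y. g y $ b $ c) differentiable at x"
    using g_entrywise_differentiable[OF x] by (simp add: entrywise_differentiable_def)
  show "g y $ b $ c = g y $ c $ b" if "y \<in> U" for y
    using g_sym that by (metis symmetric_component)
qed

text \<open>This is \<open>\<nabla>g = 0\<close>.\<close>

lemma pd_matrix_metric:
  assumes x: "x \<in> U"
  shows "pd_matrix g a x
    = transpose (conn_matrix (christoffel g) x a) ** g x + g x ** conn_matrix (christoffel g) x a"
proof -
  have gs: "g x $ i $ j = g x $ j $ i" for i j using g_sym x by (metis symmetric_component)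
  have "pd (\<lambda>y. g y $ b $ c) a x
     = (\<Sum>d\<in>UNIV. g x $ c $ d * christoffel g x d a b) + (\<Sum>d\<in>UNIV. g x $ b $ d * christoffel g x d a c)"
    for b c
    unfolding christoffel_lowered[OF x]
    using pd_metric_sym[OF x, of c b a] pd_metric_sym[OF x, of c a b] pd_metric_sym[OF x, of b a c]
    by (simp add: field_simps)
  thus ?thesis
    unfolding conn_matrix_def
    by (simp add: vec_eq_iff matrix_mult_component transpose_component pd_matrix_def gs[of _ "_::'n"]
        mult.commute)
qed

definition nabla_matrix :: "'n tfield \<Rightarrow> real^'n \<Rightarrow> 'n \<Rightarrow> real^'n^'n" where
  "nabla_matrix T x a = (\<chi> b c. nabla g T x a b c)"

lemma nabla_matrix_eq:
  "nabla_matrix T x a = pd_matrix T a x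
     - transpose (conn_matrix (christoffel g) x a) ** T x - T x ** conn_matrix (christoffel g) x a"
  unfolding nabla_matrix_def nabla_def by (simp add: vec_eq_iff cov02_matrix)

lemma cov02_christoffel: "cov02 (christoffel g) T x a b c = nabla_matrix T x a $ b $ c"
  by (simp add: nabla_matrix_def nabla_def)

lemma up2_entrywise_differentiable:
  assumes x: "x \<in> U" and T: "entrywise_differentiable T x"
  shows "entrywise_differentiable (up2 g T) x"
  by (rule entrywise_differentiable_transform_within_open[OF U_open x, of "\<lambda>y. ginv g y ** T y ** ginv g y"])
     (auto simp: up2_eq intro!: entrywise_differentiable_mult ginv_entrywise_differentiable x T)

lemma cov20_christoffel_up2:
  assumes x: "x \<in> U" and T: "entrywise_differentiable T x"
  shows "cov20 (christoffel g) (up2 g T) x a b c = (ginv g x ** nabla_matrix T x a ** ginv g x) $ b $ c"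
proof -
  have dgi: "entrywise_differentiable (ginv g) x" by (rule ginv_entrywise_differentiable[OF x])
  have "pd_matrix (\<lambda>y. ginv g y ** T y ** ginv g y) a x = pd_matrix (up2 g T) a x"
    by (rule pd_matrix_transform_within_open[OF U_open x])
       (auto simp: up2_eq intro!: entrywise_differentiable_mult dgi T)
  hence D: "pd_matrix (up2 g T) a x = (pd_matrix (ginv g) a x ** T x + ginv g x ** pd_matrix T a x)
      ** ginv g x + ginv g x ** T x ** pd_matrix (ginv g) a x"
    by (simp add: pd_matrix_mult entrywise_differentiable_mult dgi T)
  show ?thesis
    unfolding cov20_matrix D nabla_matrix_eq pd_matrix_ginv[OF x] pd_matrix_metric[OF x] up2_eq[OF x]
    using raise_both_indices_algebra[OF ginv_left[OF x] ginv_right[OF x]] by simp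
qed

lemma cov11_christoffel_up1:
  assumes x: "x \<in> U" and T: "entrywise_differentiable T x"
  shows "cov11 (christoffel g) (up1 g T) x a b c = (ginv g x ** nabla_matrix T x a) $ b $ c"
proof -
  have dgi: "entrywise_differentiable (ginv g) x" by (rule ginv_entrywise_differentiable[OF x])
  have D: "pd_matrix (up1 g T) a x = pd_matrix (ginv g) a x ** T x + ginv g x ** pd_matrix T a x"
    unfolding up1_eq[abs_def] by (simp add: pd_matrix_mult dgi T)
  show ?thesis
    unfolding cov11_matrix D nabla_matrix_eq pd_matrix_ginv[OF x] pd_matrix_metric[OF x] up1_eq
    using raise_first_index_algebra[OF ginv_left[OF x] ginv_right[OF x]] by simp
qed

lemma nabla_matrix_complement:
  assumes x: "x \<in> U" and P: "entrywise_differentiable P x" and Q: "entrywise_differentiable Q x"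
    and PQ: "\<forall>y\<in>U. P y + Q y = g y"
  shows "nabla_matrix Q x a = - nabla_matrix P x a"
proof -
  have "pd_matrix (\<lambda>y. g y - P y) a x = pd_matrix Q a x"
    by (rule pd_matrix_transform_within_open[OF U_open x])
       (use PQ in \<open>auto simp: algebra_simps intro!: entrywise_differentiable_diff
         g_entrywise_differentiable x P\<close>)
  hence DQ: "pd_matrix Q a x = pd_matrix g a x - pd_matrix P a x"
    by (simp add: pd_matrix_diff g_entrywise_differentiable[OF x] P)
  have Qx: "Q x = g x - P x" using PQ x by (auto simp: algebra_simps)
  show ?thesis
    unfolding nabla_matrix_eq DQ pd_matrix_metric[OF x] Qx
    by (simp add: matrix_diff_ldistrib matrix_diff_rdistrib algebra_simps)
qed

lemma nabla_matrix_sym: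
  assumes x: "x \<in> U" and P: "entrywise_differentiable P x" and P_sym: "\<forall>y\<in>U. transpose (P y) = P y"
  shows "transpose (nabla_matrix P x a) = nabla_matrix P x a"
proof -
  have "pd_matrix (\<lambda>y. transpose (P y)) a x = pd_matrix P a x"
    by (rule pd_matrix_transform_within_open[OF U_open x])
       (use P_sym P in \<open>auto simp: entrywise_differentiable_def transpose_def\<close>)
  hence "transpose (pd_matrix P a x) = pd_matrix P a x"
    unfolding pd_matrix_def by (simp add: transpose_def vec_eq_iff)
  moreover have "transpose (P x) = P x" using P_sym x by blast
  ultimately show ?thesis
    unfolding nabla_matrix_eq
    by (simp add: transpose_def vec_eq_iff matrix_mult_component mult.commute algebra_simps)
qed

lemma nabla_matrix_split:
  assumes x: "x \<in> U" and P: "entrywise_differentiable P x"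
    and P_idem: "\<forall>y\<in>U. P y ** ginv g y ** P y = P y"
  shows "nabla_matrix P x a = nabla_matrix P x a ** ginv g x ** P x + P x ** ginv g x ** nabla_matrix P x a"
proof -
  have dgi: "entrywise_differentiable (ginv g) x" by (rule ginv_entrywise_differentiable[OF x])
  have "pd_matrix (\<lambda>y. P y ** (ginv g y ** P y)) a x = pd_matrix P a x"
    by (rule pd_matrix_transform_within_open[OF U_open x])
       (use P_idem in \<open>auto simp: matrix_mul_assoc intro!: entrywise_differentiable_mult dgi P\<close>)
  hence "pd_matrix P a x = pd_matrix P a x ** (ginv g x ** P x)
      + P x ** (pd_matrix (ginv g) a x ** P x + ginv g x ** pd_matrix P a x)"
    by (simp add: pd_matrix_mult entrywise_differentiable_mult dgi P)
  moreover have "P x ** ginv g x ** P x = P x" using P_idem x by blast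
  ultimately show ?thesis
    unfolding nabla_matrix_eq
    by (intro idempotent_derivative_algebra[OF ginv_left[OF x] ginv_right[OF x]])
       (simp_all add: pd_matrix_ginv[OF x] pd_matrix_metric[OF x])
qed

end

section \<open>Orthogonal projector pairs\<close>

lemma cov20_biconf:
  "cov20 (biconf p g P Q) T x a b c = cov20 (christoffel g) T x a b c
     + (\<Sum>d\<in>UNIV. Lten p g P Q x b a d * T x $ d $ c) + (\<Sum>d\<in>UNIV. Lten p g P Q x c a d * T x $ b $ d)"
  unfolding cov20_def biconf_def by (simp add: ring_distribs sum.distrib)

lemma cov02_biconf:
  "cov02 (biconf p g P Q) T x a b c = cov02 (christoffel g) T x a b c
     - (\<Sum>d\<in>UNIV. Lten p g P Q x d a b * T x $ d $ c) - (\<Sum>d\<in>UNIV. Lten p g P Q x d a c * T x $ b $ d)"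
  unfolding cov02_def biconf_def by (simp add: ring_distribs sum.distrib)

lemma cov11_biconf:
  "cov11 (biconf p g P Q) T x a b c = cov11 (christoffel g) T x a b c
     + (\<Sum>d\<in>UNIV. Lten p g P Q x b a d * T x $ d $ c) - (\<Sum>d\<in>UNIV. Lten p g P Q x d a c * T x $ b $ d)"
  unfolding cov11_def biconf_def by (simp add: ring_distribs sum.distrib)

lemma cov_cong_at:
  assumes "G x = G' x"
  shows "cov02 G T x = cov02 G' T x" "cov20 G T x = cov20 G' T x" "cov11 G T x = cov11 G' T x"
  using assms by (simp_all add: fun_eq_iff cov02_def cov20_def cov11_def)

locale biconformal_structure = metric_chart U g
  for U :: "(real^'n::finite) set" and g :: "'n tfield" +
  fixes P Q :: "'n tfield" and p :: nat
  assumes P_smooth: "smooth_tfield U P" and Q_smooth: "smooth_tfield U Q"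
    and P_sym: "\<forall>x\<in>U. transpose (P x) = P x" and Q_sym: "\<forall>x\<in>U. transpose (Q x) = Q x"
    and P_add_Q: "\<forall>x\<in>U. P x + Q x = g x"
    and P_idem: "\<forall>x\<in>U. P x ** ginv g x ** P x = P x"
    and Q_idem: "\<forall>x\<in>U. Q x ** ginv g x ** Q x = Q x"
    and P_Q_orth: "\<forall>x\<in>U. P x ** ginv g x ** Q x = 0"
    and rank: "\<forall>x\<in>U. trace (ginv g x ** P x) = real p"
    and p_pos: "1 \<le> p" and p_less: "p < CARD('n)"
begin

lemma P_differentiable: "x \<in> U \<Longrightarrow> entrywise_differentiable P x"
  by (rule smooth_tfield_entrywise_differentiable[OF P_smooth])

lemma Q_differentiable: "x \<in> U \<Longrightarrow> entrywise_differentiable Q x"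
  by (rule smooth_tfield_entrywise_differentiable[OF Q_smooth])

lemma Q_P_orth: "x \<in> U \<Longrightarrow> Q x ** ginv g x ** P x = 0"
  using arg_cong[OF P_Q_orth[rule_format], of x transpose]
  by (simp add: matrix_transpose_mul P_sym Q_sym ginv_sym matrix_mul_assoc)

lemma nabla_Q: "x \<in> U \<Longrightarrow> nabla_matrix Q x a = - nabla_matrix P x a"
  by (rule nabla_matrix_complement[OF _ P_differentiable Q_differentiable P_add_Q])

lemma algebra_at:
  assumes x: "x \<in> U"
  shows "biconformal_algebra (g x) (ginv g x) (P x) (Q x) (nabla_matrix P x) (real p)"
proof
  fix a
  show "transpose (nabla_matrix P x a) = nabla_matrix P x a"
    by (rule nabla_matrix_sym[OF x P_differentiable[OF x] P_sym])
  show "nabla_matrix P x a = nabla_matrix P x a ** ginv g x ** P x + P x ** ginv g x ** nabla_matrix P x a"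
    by (rule nabla_matrix_split[OF x P_differentiable[OF x] P_idem])
qed (use x p_pos p_less in \<open>simp_all add: ginv_sym ginv_left ginv_right P_sym Q_sym P_add_Q
       P_idem Q_idem P_Q_orth rank\<close>)

abbreviation E_at :: "real^'n \<Rightarrow> real^'n" where
  "E_at x \<equiv> biconformal_algebra.E (ginv g x) (P x) (nabla_matrix P x)"

abbreviation L_at :: "real^'n \<Rightarrow> 'n \<Rightarrow> 'n \<Rightarrow> 'n \<Rightarrow> real" where
  "L_at x \<equiv> biconformal_algebra.L (ginv g x) (P x) (Q x) (nabla_matrix P x) (real p)"

lemma Mten_eq: "x \<in> U \<Longrightarrow> Mten g P x = biconformal_algebra.M (nabla_matrix P x)"
proof -
  assume x: "x \<in> U"
  interpret A: biconformal_algebra "g x" "ginv g x" "P x" "Q x" "nabla_matrix P x" "real p"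
    by (rule algebra_at[OF x])
  show ?thesis by (simp add: fun_eq_iff Mten_def A.M_def nabla_matrix_def)
qed

lemma Evec_eq: "x \<in> U \<Longrightarrow> Evec g P x a = E_at x $ a"
proof -
  assume x: "x \<in> U"
  interpret A: biconformal_algebra "g x" "ginv g x" "P x" "Q x" "nabla_matrix P x" "real p"
    by (rule algebra_at[OF x])
  show ?thesis by (simp add: Evec_def A.E_def Mten_eq[OF x] up2_eq[OF x])
qed

lemma Lten_eq: "x \<in> U \<Longrightarrow> Lten p g P Q x a b c = L_at x a b c"
proof -
  assume x: "x \<in> U"
  interpret A: biconformal_algebra "g x" "ginv g x" "P x" "Q x" "nabla_matrix P x" "real p"
    by (rule algebra_at[OF x])
  show ?thesis
    by (simp add: Lten_def A.L_def Evec_eq[OF x] A.W_def Wvec_def Mten_eq[OF x] up1_eq up2_eq[OF x])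
qed

lemma div_raised_P: "x \<in> U \<Longrightarrow> (\<Sum>a\<in>UNIV. cov20 (biconf p g P Q) (up2 g P) x a a b) = 0"
proof -
  assume x: "x \<in> U"
  interpret A: biconformal_algebra "g x" "ginv g x" "P x" "Q x" "nabla_matrix P x" "real p"
    by (rule algebra_at[OF x])
  show ?thesis
    unfolding cov20_biconf Lten_eq[OF x] cov20_christoffel_up2[OF x P_differentiable[OF x]] up2_eq[OF x]
    by (rule A.div_raised_P)
qed

lemma div_mixed_P: "x \<in> U \<Longrightarrow> (\<Sum>a\<in>UNIV. cov11 (biconf p g P Q) (up1 g P) x a a b) = 0"
proof -
  assume x: "x \<in> U"
  interpret A: biconformal_algebra "g x" "ginv g x" "P x" "Q x" "nabla_matrix P x" "real p"
    by (rule algebra_at[OF x])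
  show ?thesis
    unfolding cov11_biconf Lten_eq[OF x] cov11_christoffel_up1[OF x P_differentiable[OF x]] up1_eq
    by (rule A.div_mixed_P)
qed

lemma raised_P_contract_cov_P:
  "x \<in> U \<Longrightarrow> (\<Sum>b\<in>UNIV. \<Sum>c\<in>UNIV. up2 g P x $ b $ c * cov02 (biconf p g P Q) P x a b c) = - Evec g P x a"
proof -
  assume x: "x \<in> U"
  interpret A: biconformal_algebra "g x" "ginv g x" "P x" "Q x" "nabla_matrix P x" "real p"
    by (rule algebra_at[OF x])
  show ?thesis
    unfolding cov02_biconf Lten_eq[OF x] cov02_christoffel up2_eq[OF x] Evec_eq[OF x]
    by (rule A.raised_P_contract_cov_P)
qed

lemma raised_P_contract_cov_P_first:
  "x \<in> U \<Longrightarrow> (\<Sum>d\<in>UNIV. \<Sum>r\<in>UNIV. up2 g P x $ d $ r * cov02 (biconf p g P Q) P x d r b) = 0"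
proof -
  assume x: "x \<in> U"
  interpret A: biconformal_algebra "g x" "ginv g x" "P x" "Q x" "nabla_matrix P x" "real p"
    by (rule algebra_at[OF x])
  show ?thesis
    unfolding cov02_biconf Lten_eq[OF x] cov02_christoffel up2_eq[OF x]
    by (rule A.raised_P_contract_cov_P_first)
qed

text \<open>The full contraction \<open>P\<^sub>b\<^sub>c P\<^sup>b\<^sup>c = p\<close> is constant.\<close>

lemma P_contract_cov_raised_P:
  assumes x: "x \<in> U"
  shows "(\<Sum>b\<in>UNIV. \<Sum>c\<in>UNIV. P x $ b $ c * cov20 G (up2 g P) x a b c)
       = - (\<Sum>b\<in>UNIV. \<Sum>c\<in>UNIV. up2 g P x $ b $ c * cov02 G P x a b c)"
proof -
  have "(\<Sum>b\<in>UNIV. \<Sum>c\<in>UNIV. P y $ b $ c * up2 g P y $ b $ c) = real p" if y: "y \<in> U" for y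
  proof -
    have "(\<Sum>b\<in>UNIV. \<Sum>c\<in>UNIV. P y $ b $ c * up2 g P y $ b $ c) = trace (P y ** ginv g y ** P y ** ginv g y)"
      by (simp add: sum_product_eq_trace up2_eq[OF y] P_sym y matrix_mul_assoc)
    also have "\<dots> = trace (ginv g y ** P y)"
      using P_idem y by (simp add: trace_mul_sym[of "P y"])
    finally show ?thesis using rank y by simp
  qed
  hence "pd (\<lambda>y. \<Sum>b\<in>UNIV. \<Sum>c\<in>UNIV. P y $ b $ c * up2 g P y $ b $ c) a x = pd (\<lambda>y. real p) a x"
    by (intro pd_transform_within_open[OF U_open x, symmetric]) auto
  thus ?thesis
    using cov_contraction_leibniz[OF P_differentiable[OF x]
        up2_entrywise_differentiable[OF x P_differentiable[OF x]], of G a]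
    by (simp add: pd_const eq_neg_iff_add_eq_0)
qed

lemma mixed_P_contract_cov_mixed_Q:
  assumes x: "x \<in> U"
  shows "(\<Sum>d\<in>UNIV. \<Sum>r\<in>UNIV. up1 g P x $ d $ r * cov11 G (up1 g Q) x b r d) = 0"
proof (rule trace_cov11_idempotent[OF U_open x])
  show "\<forall>y\<in>U. up1 g Q y ** up1 g Q y = up1 g Q y"
    using Q_idem by (simp add: up1_eq) (metis matrix_mul_assoc)
  show "entrywise_differentiable (up1 g Q) x"
    unfolding up1_eq[abs_def]
    by (intro entrywise_differentiable_mult ginv_entrywise_differentiable Q_differentiable x)
  show "up1 g P x ** up1 g Q x = 0"
    using P_Q_orth x by (simp add: up1_eq) (metis matrix_mul_assoc times0_right)
  show "up1 g Q x ** up1 g P x = 0"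
    using Q_P_orth[OF x] by (simp add: up1_eq) (metis matrix_mul_assoc times0_right)
qed

lemma swap: "biconformal_structure U g Q P (CARD('n) - p)"
proof unfold_locales
  show "\<forall>x\<in>U. trace (ginv g x ** Q x) = real (CARD('n) - p)"
  proof
    fix x assume x: "x \<in> U"
    have "ginv g x ** Q x = mat 1 - ginv g x ** P x"
      using P_add_Q x ginv_left[OF x] by (metis add_diff_cancel_left' matrix_add_ldistrib)
    thus "trace (ginv g x ** Q x) = real (CARD('n) - p)"
      using rank x p_less by (simp add: trace_sub trace_I of_nat_diff)
  qed
qed (use p_pos p_less U_open g_smooth g_sym g_nondeg P_smooth Q_smooth P_sym Q_sym P_add_Q P_idem Q_idem
      Q_P_orth in \<open>auto simp: add.commute\<close>)

lemma Mten_swap: "x \<in> U \<Longrightarrow> Mten g Q x a b c = - Mten g P x a b c"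
  using nabla_Q[of x] by (simp add: Mten_def vec_eq_iff nabla_matrix_def)

lemma Evec_swap: "x \<in> U \<Longrightarrow> Evec g Q x a = Wvec g P Q x a"
  by (simp add: Evec_def Wvec_def Mten_swap sum_negf)

lemma Wvec_swap: "x \<in> U \<Longrightarrow> Wvec g Q P x a = Evec g P x a"
  by (simp add: Evec_def Wvec_def Mten_swap sum_negf)

lemma biconf_swap: "x \<in> U \<Longrightarrow> biconf (CARD('n) - p) g Q P x = biconf p g P Q x"
proof -
  assume x: "x \<in> U"
  have "(\<Sum>q\<in>UNIV. (up1 g Q x $ a $ q - up1 g P x $ a $ q) * (\<Sum>d\<in>UNIV. ginv g x $ q $ d * Mten g Q x d b c))
      = (\<Sum>q\<in>UNIV. (up1 g P x $ a $ q - up1 g Q x $ a $ q) * (\<Sum>d\<in>UNIV. ginv g x $ q $ d * Mten g P x d b c))"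
    for a b c
    by (rule sum.cong[OF refl]) (simp add: Mten_swap[OF x] sum_negf algebra_simps)
  thus ?thesis
    using p_less
    by (simp add: fun_eq_iff biconf_def Lten_def Evec_swap[OF x] Wvec_swap[OF x] of_nat_diff algebra_simps)
qed

end

theorem mainTheorem2:
  fixes U :: "(real^'n) set" and g P Q :: "'n tfield" and p :: nat
  assumes U_open: "open U"
    and smooth: "smooth_tfield U g" "smooth_tfield U P" "smooth_tfield U Q"
    and g_sym: "\<forall>x\<in>U. transpose (g x) = g x"
    and g_nondeg: "\<forall>x\<in>U. invertible (g x)"
    and P_sym: "\<forall>x\<in>U. transpose (P x) = P x"
    and Pi_sym: "\<forall>x\<in>U. transpose (Q x) = Q x"
    and compl: "\<forall>x\<in>U. P x + Q x = g x"
    and P_proj: "\<forall>x\<in>U. \<forall>a b. (\<Sum>q\<in>UNIV. P x $ a $ q * up1 g P x $ q $ b) = P x $ a $ b"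
    and Pi_proj: "\<forall>x\<in>U. \<forall>a b. (\<Sum>q\<in>UNIV. Q x $ a $ q * up1 g Q x $ q $ b) = Q x $ a $ b"
    and orth: "\<forall>x\<in>U. \<forall>a b. (\<Sum>q\<in>UNIV. P x $ a $ q * up1 g Q x $ q $ b) = 0"
    and rank: "\<forall>x\<in>U. (\<Sum>a\<in>UNIV. up1 g P x $ a $ a) = real p"
    and p_bounds: "1 \<le> p" "p \<le> CARD('n) - 1"
  shows "\<forall>x\<in>U.
    (let G = biconf p g P Q;
         E = Evec g P x; W = Wvec g P Q x
     in (\<forall>b. (\<Sum>a\<in>UNIV. cov20 G (up2 g P) x a a b) = 0)
      \<and> (\<forall>b. (\<Sum>a\<in>UNIV. cov20 G (up2 g Q) x a a b) = 0)
      \<and> (\<forall>b. (\<Sum>a\<in>UNIV. cov11 G (up1 g P) x a a b) = 0)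
      \<and> (\<forall>b. (\<Sum>a\<in>UNIV. cov11 G (up1 g Q) x a a b) = 0)
      \<and> (\<forall>a. (\<Sum>b\<in>UNIV. \<Sum>c\<in>UNIV. up2 g P x $ b $ c * cov02 G P x a b c) = - E a)
      \<and> (\<forall>a. (\<Sum>b\<in>UNIV. \<Sum>c\<in>UNIV. P x $ b $ c * cov20 G (up2 g P) x a b c) = E a)
      \<and> (\<forall>a. (\<Sum>b\<in>UNIV. \<Sum>c\<in>UNIV. up2 g Q x $ b $ c * cov02 G Q x a b c) = - W a)
      \<and> (\<forall>a. (\<Sum>b\<in>UNIV. \<Sum>c\<in>UNIV. Q x $ b $ c * cov20 G (up2 g Q) x a b c) = W a)
      \<and> (\<forall>b. (\<Sum>d\<in>UNIV. \<Sum>r\<in>UNIV. up1 g P x $ d $ r * cov11 G (up1 g Q) x b r d) = 0)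
      \<and> (\<forall>b. (\<Sum>d\<in>UNIV. \<Sum>r\<in>UNIV. up1 g Q x $ d $ r * cov11 G (up1 g P) x b r d) = 0)
      \<and> (\<forall>b. (\<Sum>d\<in>UNIV. \<Sum>r\<in>UNIV. up2 g P x $ d $ r * cov02 G P x d r b) = 0)
      \<and> (\<forall>b. (\<Sum>d\<in>UNIV. \<Sum>r\<in>UNIV. up2 g Q x $ d $ r * cov02 G Q x d r b) = 0))"
proof -
  have "biconformal_structure U g P Q p"
  proof unfold_locales
    show "\<forall>x\<in>U. P x ** ginv g x ** P x = P x" "\<forall>x\<in>U. Q x ** ginv g x ** Q x = Q x"
      "\<forall>x\<in>U. P x ** ginv g x ** Q x = 0"
      using P_proj Pi_proj orth
      by (simp_all add: vec_eq_iff matrix_mult_component up1_eq[symmetric] flip: matrix_mul_assoc)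
    show "\<forall>x\<in>U. trace (ginv g x ** P x) = real p"
      using rank by (simp add: trace_def up1_eq[symmetric])
    show "p < CARD('n)" using p_bounds by (simp add: Suc_le_eq)
  qed (use assms in auto)
  then interpret biconformal_structure U g P Q p .
  interpret swapped: biconformal_structure U g Q P "CARD('n) - p" by (rule swap)
  show ?thesis
    unfolding Let_def
    using swapped.div_raised_P swapped.div_mixed_P swapped.raised_P_contract_cov_P
      swapped.P_contract_cov_raised_P swapped.mixed_P_contract_cov_mixed_Q
      swapped.raised_P_contract_cov_P_first
    by (simp add: cov_cong_at[OF biconf_swap] Evec_swap div_raised_P div_mixed_P
        raised_P_contract_cov_P P_contract_cov_raised_P mixed_P_contract_cov_mixed_Q
        raised_P_contract_cov_P_first)
qed

end
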